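(* Every cubic (3-regular) graph $G$ of order $6$ (namely the complete bipartite graph $K_{3,3}$ and the triangular prism $K_3\square K_2$) satisfies $\mathcal{C}_f(G)=6$.
   Context: All graphs are finite and simple; $G=(V,E)$, $N(v)$ is the open neighborhood of $v$. A dominating set is $D\subseteq V$ such that every vertex of $V\setminus D$ has a neighbor in $D$. For an integer $k\geq 1$, a $k$-fair dominating set is a dominating set $D$ such that $|N(v)\cap D|=k$ for every $v\in V\setminus D$. A fair dominating set is a $k$-fair dominating set for some integer $k\geq 1$. A fair coalition consists of two disjoint sets $A_1,A_2\subseteq V$, neither of which is a fair dominating set, such that $A_1\cup A_2$ is a fair dominating set. A fair coalition partition ($fc$-partition) of $G$ is a partition $\Upsilon=\{A_1,\dots,A_k\}$ of $V$ such that every $A_i$ is either a singleton fair dominating set of $G$, or is not a fair dominating set and forms a fair coalition with some other non-fair-dominating set $A_j\in\Upsilon$. The fair coalition number $\mathcal{C}_f(G)$ is the maximum number of parts of an $fc$-partition of $G$. *)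

theory Defs
  imports Main "HOL-Library.Disjoint_Sets"
begin

definition simple_graph :: "'a set \<Rightarrow> ('a \<Rightarrow> 'a \<Rightarrow> bool) \<Rightarrow> bool" where
  "simple_graph V E \<longleftrightarrow> finite V \<and> (\<forall>u v. E u v \<longrightarrow> u \<in> V \<and> v \<in> V)
     \<and> (\<forall>u v. E u v \<longrightarrow> E v u) \<and> (\<forall>v. \<not> E v v)"

definition nbhd :: "'a set \<Rightarrow> ('a \<Rightarrow> 'a \<Rightarrow> bool) \<Rightarrow> 'a \<Rightarrow> 'a set" where
  "nbhd V E v = {u \<in> V. E v u}"

definition dominating_set :: "'a set \<Rightarrow> ('a \<Rightarrow> 'a \<Rightarrow> bool) \<Rightarrow> 'a set \<Rightarrow> bool" where
  "dominating_set V E D \<longleftrightarrow> D \<subseteq> V \<and> (\<forall>v \<in> V - D. \<exists>u \<in> D. E v u)"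

definition k_fair_dominating :: "'a set \<Rightarrow> ('a \<Rightarrow> 'a \<Rightarrow> bool) \<Rightarrow> nat \<Rightarrow> 'a set \<Rightarrow> bool" where
  "k_fair_dominating V E k D \<longleftrightarrow> dominating_set V E D
     \<and> (\<forall>v \<in> V - D. card (nbhd V E v \<inter> D) = k)"

definition fair_dominating :: "'a set \<Rightarrow> ('a \<Rightarrow> 'a \<Rightarrow> bool) \<Rightarrow> 'a set \<Rightarrow> bool" where
  "fair_dominating V E D \<longleftrightarrow> (\<exists>k \<ge> 1. k_fair_dominating V E k D)"

definition fair_coalition :: "'a set \<Rightarrow> ('a \<Rightarrow> 'a \<Rightarrow> bool) \<Rightarrow> 'a set \<Rightarrow> 'a set \<Rightarrow> bool" where
  "fair_coalition V E A1 A2 \<longleftrightarrow> A1 \<subseteq> V \<and> A2 \<subseteq> V \<and> A1 \<inter> A2 = {}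
     \<and> \<not> fair_dominating V E A1 \<and> \<not> fair_dominating V E A2
     \<and> fair_dominating V E (A1 \<union> A2)"

definition fc_partition :: "'a set \<Rightarrow> ('a \<Rightarrow> 'a \<Rightarrow> bool) \<Rightarrow> 'a set set \<Rightarrow> bool" where
  "fc_partition V E P \<longleftrightarrow> partition_on V P \<and>
     (\<forall>A \<in> P. (card A = 1 \<and> fair_dominating V E A)
        \<or> (\<not> fair_dominating V E A \<and> (\<exists>B \<in> P. B \<noteq> A \<and> fair_coalition V E A B)))"

definition fair_coalition_number :: "'a set \<Rightarrow> ('a \<Rightarrow> 'a \<Rightarrow> bool) \<Rightarrow> nat" where
  "fair_coalition_number V E = Max {card P | P. fc_partition V E P}"

end

theory Submission
  imports Defs
begin

text \<open>An edge \<open>vu\<close> of a cubic graph on six vertices that lies in no triangle is a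
  1-fair dominating set: the two further neighbours of \<open>v\<close> and of \<open>u\<close> are four
  distinct vertices, hence all of \<open>V - {v, u}\<close>, each seeing exactly one end of the edge.
  Every vertex \<open>v\<close> lies on such an edge: the two vertices \<open>x, y\<close> outside
  \<open>N[v]\<close> each have at least two neighbours in the three-set \<open>N(v)\<close>, so they
  share one, \<open>t\<close>, and then \<open>N(t) = {v, x, y}\<close> is disjoint from \<open>N(v)\<close>.
  No single vertex dominates, so the partition into singletons is an fc-partition,
  and no partition has more than \<open>|V|\<close> parts.\<close>

lemma simple_graphD:
  assumes "simple_graph V E"
  shows "finite V" and "E u v \<Longrightarrow> u \<in> V" and "E u v \<Longrightarrow> v \<in> V"
    and "E u v \<Longrightarrow> E v u" and "\<not> E v v"
  using assms unfolding simple_graph_def by blast+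

lemma finite_nbhd: "finite V \<Longrightarrow> finite (nbhd V E v)"
  unfolding nbhd_def by simp

lemma nbhd_subset_Diff:
  assumes "simple_graph V E" and "\<not> E v z"
  shows "nbhd V E z \<subseteq> V - {v, z}"
  using assms simple_graphD[OF assms(1)] unfolding nbhd_def by blast

lemma card_Diff_closed_nbhd:
  assumes g: "simple_graph V E" and "v \<in> V"
  shows "card (V - insert v (nbhd V E v)) = card V - card (nbhd V E v) - 1"
proof -
  have "insert v (nbhd V E v) \<subseteq> V" "v \<notin> nbhd V E v"
    using assms simple_graphD(5)[OF g] unfolding nbhd_def by auto
  moreover have "finite V"
    using simple_graphD(1)[OF g] .
  ultimately show ?thesis
    by (simp add: card_Diff_subset finite_nbhd)
qed

lemma card_le_Suc_card_Int_if_subset_insert: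
  assumes "finite A" and "A \<subseteq> insert a B"
  shows "card A \<le> Suc (card (A \<inter> B))"
proof -
  have "A \<subseteq> insert a (A \<inter> B)"
    using assms(2) by blast
  then have "card A \<le> card (insert a (A \<inter> B))"
    using assms(1) by (intro card_mono) auto
  also have "\<dots> \<le> Suc (card (A \<inter> B))"
    using assms(1) by (simp add: card_insert_if)
  finally show ?thesis .
qed

lemma Int_nonempty_if_card_add_gt:
  assumes "finite C" and "A \<subseteq> C" and "B \<subseteq> C" and "card C < card A + card B"
  shows "A \<inter> B \<noteq> {}"
proof
  assume "A \<inter> B = {}"
  then have "card A + card B = card (A \<union> B)"
    using assms(1-3) by (simp add: card_Un_disjoint finite_subset)
  also have "\<dots> \<le> card C"
    using assms(1-3) by (intro card_mono) auto
  finally show False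
    using assms(4) by simp
qed

lemma partition_on_card_le:
  assumes "finite A" and "partition_on A P"
  shows "card P \<le> card A"
proof -
  have fin: "finite p" if "p \<in> P" for p
    using assms(1) partition_onD1[OF assms(2)] that by (metis Union_upper finite_subset)
  have "card P = (\<Sum>p\<in>P. 1)" by simp
  also have "\<dots> \<le> (\<Sum>p\<in>P. card p)"
    using fin partition_onD3[OF assms(2)] by (intro sum_mono) (metis One_nat_def Suc_leI card_gt_0_iff)
  also have "\<dots> = card A"
    using product_partition[OF assms(2) fin] by simp
  finally show ?thesis .
qed

lemma fair_coalition_number_eq_card:
  assumes "finite V" and "fc_partition V E ((\<lambda>v. {v}) ` V)"
  shows "fair_coalition_number V E = card V"
proof -
  let ?S = "{card P | P. fc_partition V E P}"
  have le: "n \<le> card V" if "n \<in> ?S" for n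
    using that partition_on_card_le[OF assms(1)] unfolding fc_partition_def by auto
  have "finite ?S"
    by (rule finite_subset[of _ "{..card V}"]) (use le in auto)
  moreover have "card ((\<lambda>v. {v}) ` V) = card V"
    by (rule card_image) (simp add: inj_on_def)
  then have "card V \<in> ?S"
    using assms(2) by (metis (mono_tags, lifting) mem_Collect_eq)
  ultimately show ?thesis
    unfolding fair_coalition_number_def using le by (intro Max_eqI) auto
qed

lemma fc_partition_singletons:
  assumes "\<forall>v \<in> V. \<exists>u \<in> V. u \<noteq> v \<and> fair_coalition V E {v} {u}"
  shows "fc_partition V E ((\<lambda>v. {v}) ` V)"
  unfolding fc_partition_def
proof (intro conjI ballI)
  show "partition_on V ((\<lambda>v. {v}) ` V)"
    by (rule partition_on_singletons)
next
  fix A assume "A \<in> (\<lambda>v. {v}) ` V"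
  then obtain v where v: "v \<in> V" "A = {v}" by blast
  then obtain u where "u \<in> V" "u \<noteq> v" "fair_coalition V E {v} {u}"
    using assms by blast
  then show "card A = 1 \<and> fair_dominating V E A
      \<or> \<not> fair_dominating V E A \<and> (\<exists>B \<in> (\<lambda>v. {v}) ` V. B \<noteq> A \<and> fair_coalition V E A B)"
    using v unfolding fair_coalition_def by blast
qed

lemma singleton_not_fair_dominating:
  assumes g: "simple_graph V E" and "v \<in> V" and "card (nbhd V E v) + 1 < card V"
  shows "\<not> fair_dominating V E {v}"
proof
  assume "fair_dominating V E {v}"
  then have "V - {v} \<subseteq> nbhd V E v"
    unfolding fair_dominating_def k_fair_dominating_def dominating_set_def nbhd_def
    using simple_graphD(4)[OF g] by blast
  then have "card (V - {v}) \<le> card (nbhd V E v)"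
    using finite_nbhd[OF simple_graphD(1)[OF g]] by (rule card_mono[rotated])
  then show False
    using assms(2,3) simple_graphD(1)[OF g] by simp
qed

lemma edge_1_fair_dominating:
  assumes g: "simple_graph V E" and "E v u"
    and disj: "nbhd V E v \<inter> nbhd V E u = {}"
    and deg_sum: "card (nbhd V E v) + card (nbhd V E u) = card V"
  shows "k_fair_dominating V E 1 {v, u}"
proof -
  note gD = simple_graphD[OF g]
  have "v \<in> V" "u \<in> V"
    using \<open>E v u\<close> gD(2,3) by blast+
  have "nbhd V E v \<union> nbhd V E u \<subseteq> V"
    unfolding nbhd_def by blast
  moreover have "card (nbhd V E v \<union> nbhd V E u) = card V"
    using deg_sum disj finite_nbhd[OF gD(1)] by (simp add: card_Un_disjoint)
  ultimately have cover: "nbhd V E v \<union> nbhd V E u = V"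
    using gD(1) by (simp add: card_subset_eq)
  have exactly_one: "nbhd V E w \<inter> {v, u} = {v} \<or> nbhd V E w \<inter> {v, u} = {u}"
    if "w \<in> V - {v, u}" for w
  proof -
    have "w \<in> nbhd V E v \<or> w \<in> nbhd V E u"
      using that cover by blast
    then show ?thesis
      using that disj gD(4) \<open>v \<in> V\<close> \<open>u \<in> V\<close> unfolding nbhd_def by auto
  qed
  have "card (nbhd V E w \<inter> {v, u}) = 1" if "w \<in> V - {v, u}" for w
    using exactly_one[OF that] by auto
  moreover have "\<exists>x \<in> {v, u}. E w x" if "w \<in> V - {v, u}" for w
    using exactly_one[OF that] unfolding nbhd_def by blast
  ultimately show ?thesis
    unfolding k_fair_dominating_def dominating_set_def
    using \<open>v \<in> V\<close> \<open>u \<in> V\<close> by blast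
qed

lemma cubic_order_6_edge_without_common_neighbour:
  assumes g: "simple_graph V E" and c6: "card V = 6"
    and deg: "\<forall>v \<in> V. card (nbhd V E v) = 3" and "v \<in> V"
  shows "\<exists>t. E v t \<and> nbhd V E v \<inter> nbhd V E t = {}"
proof -
  note gD = simple_graphD[OF g]
  define N where "N = nbhd V E v"
  define R where "R = V - insert v N"
  have fN: "finite (nbhd V E z)" for z
    using finite_nbhd[OF gD(1)] .
  have "v \<notin> N"
    unfolding N_def nbhd_def using gD(5) by auto
  have "card R = 2"
    using card_Diff_closed_nbhd[OF g \<open>v \<in> V\<close>] c6 deg \<open>v \<in> V\<close>
    unfolding R_def N_def by simp
  then obtain x y where xy: "R = {x, y}" "x \<noteq> y"
    using card_2_iff by metis
  then have xy_out: "x \<noteq> v" "x \<notin> N" "y \<noteq> v" "y \<notin> N"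
    unfolding R_def by blast+
  have outside: "nbhd V E z \<subseteq> insert z' N" if R: "R = {z, z'}" for z z'
  proof -
    have "\<not> E v z"
      using R unfolding R_def N_def nbhd_def by blast
    moreover have "V - {v, z} \<subseteq> insert z' N"
      using R unfolding R_def by blast
    ultimately show ?thesis
      using nbhd_subset_Diff[OF g] by blast
  qed
  have many: "2 \<le> card (nbhd V E z \<inter> N)" if R: "R = {z, z'}" for z z'
  proof -
    have "z \<in> V"
      using R unfolding R_def by blast
    then show ?thesis
      using card_le_Suc_card_Int_if_subset_insert[OF fN outside[OF R]] deg by simp
  qed
  have "card N < card (nbhd V E x \<inter> N) + card (nbhd V E y \<inter> N)"
    using many[OF xy(1)] many[of y x] xy(1) deg \<open>v \<in> V\<close> unfolding N_def
    by (simp add: insert_commute)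
  then have "nbhd V E x \<inter> N \<inter> (nbhd V E y \<inter> N) \<noteq> {}"
    using fN unfolding N_def by (intro Int_nonempty_if_card_add_gt) auto
  then obtain t where t: "t \<in> N" "E x t" "E y t"
    unfolding nbhd_def by blast
  have "{v, x, y} \<subseteq> nbhd V E t"
    using t gD(2,4) \<open>v \<in> V\<close> unfolding N_def nbhd_def by blast
  moreover have "card {v, x, y} = 3"
    using xy(2) xy_out by simp
  ultimately have "nbhd V E t = {v, x, y}"
    using deg gD(3)[OF t(2)] fN by (metis card_subset_eq)
  moreover have "E v t"
    using t(1) unfolding N_def nbhd_def by blast
  ultimately show ?thesis
    using \<open>v \<notin> N\<close> xy_out unfolding N_def by auto
qed

theorem theorem3p1:
  fixes V :: "'a set" and E :: "'a \<Rightarrow> 'a \<Rightarrow> bool"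
  assumes "simple_graph V E"
    and "card V = 6"
    and "\<forall>v \<in> V. card (nbhd V E v) = 3"
  shows "fair_coalition_number V E = 6"
proof -
  note gD = simple_graphD[OF assms(1)]
  have "\<exists>u \<in> V. u \<noteq> v \<and> fair_coalition V E {v} {u}" if v: "v \<in> V" for v
  proof -
    obtain u where u: "E v u" "nbhd V E v \<inter> nbhd V E u = {}"
      using cubic_order_6_edge_without_common_neighbour[OF assms v] by blast
    have "u \<in> V" "u \<noteq> v"
      using u(1) gD(3,5) by blast+
    moreover have "k_fair_dominating V E 1 {v, u}"
      using edge_1_fair_dominating[OF assms(1) u] assms(2,3) v \<open>u \<in> V\<close> by simp
    ultimately show ?thesis
      using singleton_not_fair_dominating[OF assms(1)] assms(2,3) v
      unfolding fair_coalition_def fair_dominating_def by (auto simp: insert_commute)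
  qed
  then have "fc_partition V E ((\<lambda>v. {v}) ` V)"
    by (intro fc_partition_singletons) blast
  then show ?thesis
    using fair_coalition_number_eq_card gD(1) assms(2) by metis
qed

end
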